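(* Let $n,t$ be positive integers. Let $T[l,r)$ be a parallel task and let $T[l_s,r_s)$ with $l\le l_s<r_s\le r$ be a sequential task that is a bucket of $T[l,r)$, assigned to thread $i=\min(\lfloor l_st/n\rfloor,\lfloor rt/n\rfloor-1)$. Then $i\,n/t\le l_s<r_s\le (i+2)n/t$, i.e. the task only contains elements of $A[in/t,\,(i+2)n/t-1]$. Consequently (since sequential subtasks of a sequential task are subintervals of it and are processed by the same thread), all sequential tasks processed by thread $i$ only contain elements from $A[in/t,\,(i+2)n/t-1]$, a range of $O(n/t)$ elements.
   Context: An input array $A[0..n-1]$ is sorted by $t$ threads numbered $0,\dots,t-1$. A task $T[l,r)$ (integers $0\le l<r\le n$) refers to the subarray $A[l..r-1]$. Write $\underline{t}=\lfloor lt/n\rfloor$ and $\overline{t}=\lfloor rt/n\rfloor$. The task is a parallel task if $\overline{t}-\underline{t}>1$, executed by threads $\underline{t},\dots,\overline{t}-1$; otherwise ($\overline{t}-\underline{t}\le 1$) it is a sequential task. A sequential task $T[l_s,r_s)$ arising as a bucket of a parallel task $T[l,r)$ is assigned to thread $\min(\lfloor l_st/n\rfloor,\lfloor rt/n\rfloor-1)$; a sequential task is partitioned by its thread into buckets, which become sequential subtasks of the same thread. *)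

theory Defs
  imports Complex_Main
begin

definition tidx :: "nat \<Rightarrow> nat \<Rightarrow> nat \<Rightarrow> int" where
  "tidx n t x = \<lfloor>real x * real t / real n\<rfloor>"

definition is_task :: "nat \<Rightarrow> nat \<Rightarrow> nat \<Rightarrow> bool" where
  "is_task n l r \<longleftrightarrow> l < r \<and> r \<le> n"

definition parallel_task :: "nat \<Rightarrow> nat \<Rightarrow> nat \<Rightarrow> nat \<Rightarrow> bool" where
  "parallel_task n t l r \<longleftrightarrow> is_task n l r \<and> tidx n t r - tidx n t l > 1"

definition sequential_task :: "nat \<Rightarrow> nat \<Rightarrow> nat \<Rightarrow> nat \<Rightarrow> bool" where
  "sequential_task n t l r \<longleftrightarrow> is_task n l r \<and> tidx n t r - tidx n t l \<le> 1"

definition assigned_thread :: "nat \<Rightarrow> nat \<Rightarrow> nat \<Rightarrow> nat \<Rightarrow> int" where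
  "assigned_thread n t ls r = min (tidx n t ls) (tidx n t r - 1)"

end

theory Submission
  imports Defs
begin

text \<open>Thread i owns the positions x with i \<le> x t / n < i + 1. The bucket's left end lies
  in thread tidx ls, and being sequential its right end lies at most one thread further on;
  if the minimum in the assignment picks tidx r - 1 instead, then tidx ls = tidx r, and
  rs \<le> r lies in thread tidx r as well.\<close>

lemma tidx_mono:
  assumes "x \<le> y"
  shows "tidx n t x \<le> tidx n t y"
  unfolding tidx_def using assms
  by (intro floor_mono divide_right_mono mult_right_mono) auto

lemma thread_start_tidx_le:
  assumes "n > 0" and "t > 0"
  shows "real_of_int (tidx n t x) * real n / real t \<le> real x"
proof -
  have "real_of_int (tidx n t x) \<le> real x * real t / real n"
    unfolding tidx_def by linarith
  with assms show ?thesis by (simp add: field_simps)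
qed

lemma less_thread_start_tidx_succ:
  assumes "n > 0" and "t > 0"
  shows "real x < real_of_int (tidx n t x + 1) * real n / real t"
proof -
  have "real x * real t / real n < real_of_int (tidx n t x + 1)"
    unfolding tidx_def by linarith
  with assms show ?thesis by (simp add: field_simps)
qed

lemma assigned_thread_le_tidx: "assigned_thread n t ls r \<le> tidx n t ls"
  unfolding assigned_thread_def by simp

lemma tidx_le_assigned_thread_succ:
  assumes "sequential_task n t ls rs" and "rs \<le> r"
  shows "tidx n t rs \<le> assigned_thread n t ls r + 1"
proof -
  have "tidx n t rs \<le> tidx n t ls + 1"
    using assms(1) unfolding sequential_task_def by simp
  moreover have "tidx n t rs \<le> tidx n t r"
    using tidx_mono assms(2) .
  ultimately show ?thesis
    unfolding assigned_thread_def by linarith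
qed

lemma thread_start_mono:
  assumes "n > 0" and "t > 0" and "i \<le> j"
  shows "real_of_int i * real n / real t \<le> real_of_int j * real n / real t"
  using assms by (simp add: divide_right_mono mult_right_mono)

theorem lemma4p6:
  fixes n t l r ls rs :: nat
  assumes "n > 0" and "t > 0"
    and "parallel_task n t l r"
    and "sequential_task n t ls rs"
    and "l \<le> ls" and "ls < rs" and "rs \<le> r"
  shows "real_of_int (assigned_thread n t ls r) * real n / real t \<le> real ls
       \<and> real rs \<le> real_of_int (assigned_thread n t ls r + 2) * real n / real t
       \<and> (\<forall>l' r'. ls \<le> l' \<and> l' < r' \<and> r' \<le> rs \<longrightarrow>
             real_of_int (assigned_thread n t ls r) * real n / real t \<le> real l'
           \<and> real r' \<le> real_of_int (assigned_thread n t ls r + 2) * real n / real t)"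
proof -
  define i where "i = assigned_thread n t ls r"
  have left: "real_of_int i * real n / real t \<le> real ls"
    using thread_start_mono[OF assms(1,2) assigned_thread_le_tidx] thread_start_tidx_le[OF assms(1,2)]
    unfolding i_def by (rule order_trans)
  have "real rs < real_of_int (tidx n t rs + 1) * real n / real t"
    using less_thread_start_tidx_succ[OF assms(1,2)] .
  also have "\<dots> \<le> real_of_int (i + 2) * real n / real t"
    using tidx_le_assigned_thread_succ[OF assms(4,7)]
    unfolding i_def by (intro thread_start_mono[OF assms(1,2)]) simp
  finally have right: "real rs \<le> real_of_int (i + 2) * real n / real t"
    by simp
  show ?thesis
    unfolding i_def[symmetric] using left right by force
qed

end
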